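(* In the setting described in the context, suppose there exist $\hat{i}\in I$ and $j\in J_{\hat{i}}$ with $\hat{x}_j\neq0$. Then RLO-IU-SD is feasible if and only if $\sum_{j\in J}a_{ij}\hat{x}_j\ge b_i$ for all $i\in I$.
   Context: Let $I=\{1,\dots,m\}$, $J=\{1,\dots,n\}$. Given are $a_{ij}\in\mathbb{R}$, $b\in\mathbb{R}^m$, nonempty index sets $J_i\subseteq J$ ($i\in I$), an observed point $\hat{x}\in\mathbb{R}^n$, prior vectors $\hat{\alpha}_i\in\mathbb{R}^{|J_i|}$, real weights $\xi_i$ ($i\in I$), and a norm $\|\cdot\|$. The problem RLO-IU-SD is \[ \min_{\alpha,c,u,\pi,\lambda,\mu}\ \sum_{i\in I}\xi_i\|\alpha_i-\hat{\alpha}_i\| \] subject to: $\sum_{j\in J}c_j\hat{x}_j-\sum_{i\in I}b_i\pi_i=0$; $\alpha_{ij}\hat{x}_j+u_{ij}\ge0$ and $-\alpha_{ij}\hat{x}_j+u_{ij}\ge0$ for all $j\in J_i,i\in I$; $\sum_{j\in J}a_{ij}\hat{x}_j-\sum_{j\in J_i}u_{ij}\ge b_i$ for all $i\in I$; $\alpha_{ij}\ge0$ for all $j\in J_i,i\in I$; $\sum_{i\in I}\pi_i=1$; $\sum_{i\in I}a_{ij}\pi_i+\sum_{i\in I:j\in J_i}\alpha_{ij}(\lambda_{ij}-\mu_{ij})=c_j$ for all $j\in J$; $\pi_i=\lambda_{ij}+\mu_{ij}$ for all $j\in J_i,i\in I$; $\pi_i,\lambda_{ij},\mu_{ij}\ge0$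 for all $j\in J_i,i\in I$. Here $\alpha_i=(\alpha_{ij})_{j\in J_i}$, $c\in\mathbb{R}^n$, $\pi\in\mathbb{R}^m$. *)

theory Defs
  imports Complex_Main
begin

text \<open>Index sets I = {1..m}, J = {1..n}; vectors indexed by
  nat (only entries with indices in I, J, J_i matter). The objective (weights, prior
  vectors, norm) does not affect feasibility.\<close>

definition rlo_iu_sd_feasible ::
  "nat \<Rightarrow> nat \<Rightarrow> (nat \<Rightarrow> nat \<Rightarrow> real) \<Rightarrow> (nat \<Rightarrow> real) \<Rightarrow> (nat \<Rightarrow> nat set) \<Rightarrow> (nat \<Rightarrow> real) \<Rightarrow> bool"
where
  "rlo_iu_sd_feasible m n a b Js xh \<longleftrightarrow>
    (\<exists>(\<alpha>::nat \<Rightarrow> nat \<Rightarrow> real) (c::nat \<Rightarrow> real) (u::nat \<Rightarrow> nat \<Rightarrow> real)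
       (p::nat \<Rightarrow> real) (lam::nat \<Rightarrow> nat \<Rightarrow> real) (mu::nat \<Rightarrow> nat \<Rightarrow> real).
      (\<Sum>j\<in>{1..n}. c j * xh j) - (\<Sum>i\<in>{1..m}. b i * p i) = 0 \<and>
      (\<forall>i\<in>{1..m}. \<forall>j\<in>Js i. \<alpha> i j * xh j + u i j \<ge> 0 \<and> - \<alpha> i j * xh j + u i j \<ge> 0) \<and>
      (\<forall>i\<in>{1..m}. (\<Sum>j\<in>{1..n}. a i j * xh j) - (\<Sum>j\<in>Js i. u i j) \<ge> b i) \<and>
      (\<forall>i\<in>{1..m}. \<forall>j\<in>Js i. \<alpha> i j \<ge> 0) \<and>
      (\<Sum>i\<in>{1..m}. p i) = 1 \<and>
      (\<forall>j\<in>{1..n}. (\<Sum>i\<in>{1..m}. a i j * p i)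
                     + (\<Sum>i\<in>{i\<in>{1..m}. j \<in> Js i}. \<alpha> i j * (lam i j - mu i j)) = c j) \<and>
      (\<forall>i\<in>{1..m}. \<forall>j\<in>Js i. p i = lam i j + mu i j) \<and>
      (\<forall>i\<in>{1..m}. p i \<ge> 0) \<and>
      (\<forall>i\<in>{1..m}. \<forall>j\<in>Js i. lam i j \<ge> 0 \<and> mu i j \<ge> 0))"

end

theory Submission
  imports Defs
begin

text \<open>Necessity: the constraints force \<open>u\<^sub>i\<^sub>j \<ge> \<bar>\<alpha>\<^sub>i\<^sub>j x\<^sub>j\<bar> \<ge> 0\<close>, so every row
  of \<open>A x \<ge> b\<close> holds at the observed point. Sufficiency: put the whole dual weight on one
  row \<open>k\<close> and spend its slack \<open>s\<close> on a single uncertain coefficient \<open>\<alpha>\<^sub>k\<^sub>l\<close> with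
  \<open>x\<^sub>l \<noteq> 0\<close>; choosing \<open>\<lambda> - \<mu> = -sgn x\<^sub>l\<close> lowers the objective \<open>c\<^sup>T x\<close> by exactly \<open>s\<close>,
  which closes the duality gap \<open>c\<^sup>T x = b\<^sub>k\<close>.\<close>

lemma rlo_iu_sd_feasible_imp_row_feasible:
  assumes "rlo_iu_sd_feasible m n a b Js xh" and "i \<in> {1..m}"
  shows "b i \<le> (\<Sum>j\<in>{1..n}. a i j * xh j)"
proof -
  obtain \<alpha> u where
    abs_bound: "\<forall>i\<in>{1..m}. \<forall>j\<in>Js i. \<alpha> i j * xh j + u i j \<ge> 0 \<and> - \<alpha> i j * xh j + u i j \<ge> 0"
    and rows: "\<forall>i\<in>{1..m}. (\<Sum>j\<in>{1..n}. a i j * xh j) - (\<Sum>j\<in>Js i. u i j) \<ge> b i"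
    using assms(1) unfolding rlo_iu_sd_feasible_def by blast
  have "\<forall>j\<in>Js i. u i j \<ge> 0"
    using abs_bound assms(2) by force
  then have "(\<Sum>j\<in>Js i. u i j) \<ge> 0"
    by (simp add: sum_nonneg)
  moreover have "(\<Sum>j\<in>{1..n}. a i j * xh j) - (\<Sum>j\<in>Js i. u i j) \<ge> b i"
    using rows assms(2) by blast
  ultimately show ?thesis
    by linarith
qed

lemma sum_perturb_one_coefficient:
  fixes x :: "'a \<Rightarrow> 'b::field"
  assumes "finite J" "l \<in> J" "x l \<noteq> 0"
  shows "(\<Sum>j\<in>J. (a j - of_bool (j = l) * (s / x l)) * x j) = (\<Sum>j\<in>J. a j * x j) - s"
proof -
  have "(\<Sum>j\<in>J. of_bool (j = l) * (s / x l * x j)) = s"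
    using assms by (subst sum_of_bool_mult_eq) auto
  then show ?thesis
    by (simp add: algebra_simps sum_subtractf)
qed

lemma rlo_iu_sd_feasible_if_row_feasible:
  assumes finite_Js: "\<forall>i\<in>{1..m}. finite (Js i)"
    and k: "k \<in> {1..m}" and l: "l \<in> Js k" "l \<in> {1..n}" and x_l: "xh l \<noteq> 0"
    and row_feasible: "\<forall>i\<in>{1..m}. b i \<le> (\<Sum>j\<in>{1..n}. a i j * xh j)"
  shows "rlo_iu_sd_feasible m n a b Js xh"
proof -
  define s where "s = (\<Sum>j\<in>{1..n}. a k j * xh j) - b k"
  define p :: "nat \<Rightarrow> real" where "p i = of_bool (i = k)" for i
  define \<alpha> :: "nat \<Rightarrow> nat \<Rightarrow> real" where "\<alpha> i j = of_bool (i = k \<and> j = l) * (s / \<bar>xh l\<bar>)" for i j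
  define u :: "nat \<Rightarrow> nat \<Rightarrow> real" where "u i j = of_bool (i = k \<and> j = l) * s" for i j
  define lam :: "nat \<Rightarrow> nat \<Rightarrow> real" where "lam i j = p i * (1 - sgn (xh l)) / 2" for i j
  define mu :: "nat \<Rightarrow> nat \<Rightarrow> real" where "mu i j = p i * (1 + sgn (xh l)) / 2" for i j
  define c where "c j = (\<Sum>i\<in>{1..m}. a i j * p i)
    + (\<Sum>i\<in>{i\<in>{1..m}. j \<in> Js i}. \<alpha> i j * (lam i j - mu i j))" for j
  have s_nonneg: "s \<ge> 0"
    using row_feasible k by (simp add: s_def)
  have c_eq: "c j = a k j - of_bool (j = l) * (s / xh l)" for j
  proof -
    define t where "t = - (s / xh l)"
    have summand: "\<alpha> i j * (lam i j - mu i j) = of_bool (j = l) * (of_bool (i = k) * t)" for i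
      using x_l by (simp add: \<alpha>_def lam_def mu_def p_def t_def abs_if)
    have "k \<in> {i\<in>{1..m}. j \<in> Js i}" if "j = l"
      using k l that by simp
    then have "(\<Sum>i\<in>{i\<in>{1..m}. j \<in> Js i}. \<alpha> i j * (lam i j - mu i j))
        = of_bool (j = l) * t"
      unfolding summand sum_distrib_left[symmetric] by (cases "j = l") simp_all
    then show ?thesis
      using k by (simp add: c_def p_def t_def)
  qed
  have "(\<Sum>j\<in>{1..n}. c j * xh j) = (\<Sum>j\<in>{1..n}. a k j * xh j) - s"
    unfolding c_eq using l(2) x_l by (intro sum_perturb_one_coefficient) simp_all
  then have duality_gap: "(\<Sum>j\<in>{1..n}. c j * xh j) = b k"
    by (simp add: s_def)
  show ?thesis
    unfolding rlo_iu_sd_feasible_def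
  proof (intro exI conjI)
    show "(\<Sum>j\<in>{1..n}. c j * xh j) - (\<Sum>i\<in>{1..m}. b i * p i) = 0"
      using duality_gap k by (simp add: p_def)
    show "\<forall>i\<in>{1..m}. \<forall>j\<in>Js i. \<alpha> i j * xh j + u i j \<ge> 0 \<and> - \<alpha> i j * xh j + u i j \<ge> 0"
    proof (intro ballI)
      fix i j
      have "\<bar>\<alpha> i j * xh j\<bar> \<le> u i j"
        using x_l s_nonneg by (simp add: \<alpha>_def u_def abs_mult)
      then show "\<alpha> i j * xh j + u i j \<ge> 0 \<and> - \<alpha> i j * xh j + u i j \<ge> 0"
        by linarith
    qed
    show "\<forall>i\<in>{1..m}. (\<Sum>j\<in>{1..n}. a i j * xh j) - (\<Sum>j\<in>Js i. u i j) \<ge> b i"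
    proof
      fix i assume i: "i \<in> {1..m}"
      have "(\<Sum>j\<in>Js i. u i j) = of_bool (i = k) * s"
        using finite_Js i l(1) by (cases "i = k") (simp_all add: u_def)
      then show "(\<Sum>j\<in>{1..n}. a i j * xh j) - (\<Sum>j\<in>Js i. u i j) \<ge> b i"
        using row_feasible i by (cases "i = k") (simp_all add: s_def)
    qed
    show "\<forall>i\<in>{1..m}. \<forall>j\<in>Js i. \<alpha> i j \<ge> 0"
      using s_nonneg by (simp add: \<alpha>_def)
    show "(\<Sum>i\<in>{1..m}. p i) = 1"
      using k by (simp add: p_def)
    show "\<forall>j\<in>{1..n}. (\<Sum>i\<in>{1..m}. a i j * p i)
        + (\<Sum>i\<in>{i\<in>{1..m}. j \<in> Js i}. \<alpha> i j * (lam i j - mu i j)) = c j"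
      by (simp add: c_def)
    show "\<forall>i\<in>{1..m}. \<forall>j\<in>Js i. p i = lam i j + mu i j"
      by (simp add: lam_def mu_def field_simps)
    show "\<forall>i\<in>{1..m}. p i \<ge> 0"
      by (simp add: p_def)
    show "\<forall>i\<in>{1..m}. \<forall>j\<in>Js i. lam i j \<ge> 0 \<and> mu i j \<ge> 0"
      by (simp add: lam_def mu_def p_def sgn_if)
  qed
qed

theorem proposition3:
  fixes m n :: nat and a :: "nat \<Rightarrow> nat \<Rightarrow> real" and b :: "nat \<Rightarrow> real"
    and Js :: "nat \<Rightarrow> nat set" and xh :: "nat \<Rightarrow> real"
  assumes "\<forall>i\<in>{1..m}. Js i \<subseteq> {1..n} \<and> Js i \<noteq> {}"
    and "\<exists>ih\<in>{1..m}. \<exists>j\<in>Js ih. xh j \<noteq> 0"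
  shows "rlo_iu_sd_feasible m n a b Js xh \<longleftrightarrow>
         (\<forall>i\<in>{1..m}. (\<Sum>j\<in>{1..n}. a i j * xh j) \<ge> b i)"
proof
  assume "rlo_iu_sd_feasible m n a b Js xh"
  then show "\<forall>i\<in>{1..m}. (\<Sum>j\<in>{1..n}. a i j * xh j) \<ge> b i"
    using rlo_iu_sd_feasible_imp_row_feasible by blast
next
  assume row_feasible: "\<forall>i\<in>{1..m}. (\<Sum>j\<in>{1..n}. a i j * xh j) \<ge> b i"
  obtain k l where k: "k \<in> {1..m}" and l: "l \<in> Js k" and x_l: "xh l \<noteq> 0"
    using assms(2) by blast
  have "\<forall>i\<in>{1..m}. finite (Js i)"
    using assms(1) by (auto intro: finite_subset)
  moreover have "l \<in> {1..n}"
    using assms(1) k l by blast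
  ultimately show "rlo_iu_sd_feasible m n a b Js xh"
    using k l x_l row_feasible by (intro rlo_iu_sd_feasible_if_row_feasible)
qed

end
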